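(* Let $\mathbb{F}\in\{\mathbb{R},\mathbb{C}\}$, let $\{\mathcal{B}_k\}_{k\in K}$ be a maximal set of mutually unbiased bases for $\mathbb{F}^m$, so $|K|=k_{\mathbb{F}}(m)$, and let $\mathbb{S}$ be a collection of subsets of $\{1,\dots,m\}$, each of size $l$. Suppose $\mathcal{F}=\{P^{(k)}_{\mathcal{J}}:k\in K,\ \mathcal{J}\in\mathbb{S}\}$ is a $(2d_{\mathbb{F}}(m),m/2,m)$-fusion frame, where $P^{(k)}_{\mathcal{J}}$ is the $\mathcal{J}$-coordinate projection with respect to $\mathcal{B}_k$. Then $\mathcal{F}$ is a Grassmannian $2$-design if and only if $\mathbb{S}$ is a $2$-$(m,m/2,m/2-1)$ block design.
   Context: Orthonormal bases $\{b_j\},\{b'_j\}$ of $\mathbb{F}^m$ are mutually unbiased if $|\langle b_j,b'_{j'}\rangle|^2=1/m$ for all $j,j'$; a set of mutually unbiased bases consists of pairwise mutually unbiased orthonormal bases, and it is maximal if it has $k_{\mathbb{F}}(m)$ elements, where $k_{\mathbb{R}}(m)=m/2+1$, $k_{\mathbb{C}}(m)=m+1$. Let $d_{\mathbb{F}}(m)=\frac{(m+2)(m-1)}{2}$ if $\mathbb{F}=\mathbb{R}$ and $m^2-1$ if $\mathbb{F}=\mathbb{C}$. The $\mathcal{J}$-coordinate projection with respect to $\{b_j\}$ is $\sum_{j\in\mathcal{J}}b_j\otimes b_j^*$. An $(n,l,m)$-fusion frame is a set of $n$ orthogonal projections onto $l$-dimensional subspaces of $\mathbb{F}^m$ with $A\|x\|^2\le\sum_j\|P_jx\|^2\le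 B\|x\|^2$ for some $0<A\le B$. A fusion frame $\{P_j\}_{j=1}^n$ is a Grassmannian $2$-design if $\sum_jP_j\otimes P_j=\sum_j(UP_jU^* )\otimes(UP_jU^* )$ for every orthogonal (real case) or unitary (complex case) $U$. A $2$-$(m,l,\lambda)$ block design is a collection of $l$-element subsets of $\{1,\dots,m\}$ such that every $2$-element subset is contained in exactly $\lambda$ of them. *)

theory Defs
  imports Complex_Main
begin

text \<open>The field is encoded by a flag: realF = True means F = R,
 realF = False means F = C. Vectors of F^m are functions nat => complex, only the
 coordinates 0..<m being relevant; in the real case all relevant coordinates are
 required to be real. Matrices are functions nat => nat => complex (entries i,j < m).
 Indices run over 0..<m instead of 1..m.\<close>

type_synonym cvec = "nat \<Rightarrow> complex"
type_synonym cmat = "nat \<Rightarrow> nat \<Rightarrow> complex"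

definition in_F :: "bool \<Rightarrow> nat \<Rightarrow> cvec \<Rightarrow> bool" where
  "in_F realF m v \<longleftrightarrow> (realF \<longrightarrow> (\<forall>i<m. v i \<in> \<real>))"

definition mat_in_F :: "bool \<Rightarrow> nat \<Rightarrow> cmat \<Rightarrow> bool" where
  "mat_in_F realF m U \<longleftrightarrow> (realF \<longrightarrow> (\<forall>i<m. \<forall>j<m. U i j \<in> \<real>))"

definition inner_F :: "nat \<Rightarrow> cvec \<Rightarrow> cvec \<Rightarrow> complex" where
  "inner_F m u v = (\<Sum>i<m. u i * cnj (v i))"

definition norm_sq :: "nat \<Rightarrow> cvec \<Rightarrow> real" where
  "norm_sq m x = (\<Sum>i<m. (cmod (x i))\<^sup>2)"

definition mat_vec :: "nat \<Rightarrow> cmat \<Rightarrow> cvec \<Rightarrow> cvec" where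
  "mat_vec m P x = (\<lambda>i. \<Sum>j<m. P i j * x j)"

definition orthonormal_basis :: "bool \<Rightarrow> nat \<Rightarrow> (nat \<Rightarrow> cvec) \<Rightarrow> bool" where
  "orthonormal_basis realF m b \<longleftrightarrow>
     (\<forall>j<m. in_F realF m (b j)) \<and>
     (\<forall>j<m. \<forall>j'<m. inner_F m (b j) (b j') = (if j = j' then 1 else 0))"

definition mutually_unbiased :: "nat \<Rightarrow> (nat \<Rightarrow> cvec) \<Rightarrow> (nat \<Rightarrow> cvec) \<Rightarrow> bool" where
  "mutually_unbiased m b b' \<longleftrightarrow>
     (\<forall>j<m. \<forall>j'<m. (cmod (inner_F m (b j) (b' j')))\<^sup>2 = 1 / real m)"

definition kF :: "bool \<Rightarrow> nat \<Rightarrow> nat" where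
  "kF realF m = (if realF then m div 2 + 1 else m + 1)"

definition dF :: "bool \<Rightarrow> nat \<Rightarrow> nat" where
  "dF realF m = (if realF then (m + 2) * (m - 1) div 2 else m\<^sup>2 - 1)"

definition MUB_set :: "bool \<Rightarrow> nat \<Rightarrow> 'k set \<Rightarrow> ('k \<Rightarrow> nat \<Rightarrow> cvec) \<Rightarrow> bool" where
  "MUB_set realF m K B \<longleftrightarrow>
     (\<forall>k\<in>K. orthonormal_basis realF m (B k)) \<and>
     (\<forall>k\<in>K. \<forall>k'\<in>K. k \<noteq> k' \<longrightarrow> mutually_unbiased m (B k) (B k'))"

definition maximal_MUB_set :: "bool \<Rightarrow> nat \<Rightarrow> 'k set \<Rightarrow> ('k \<Rightarrow> nat \<Rightarrow> cvec) \<Rightarrow> bool" where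
  "maximal_MUB_set realF m K B \<longleftrightarrow>
     MUB_set realF m K B \<and> finite K \<and> card K = kF realF m"

definition coord_proj :: "(nat \<Rightarrow> cvec) \<Rightarrow> nat set \<Rightarrow> cmat" where
  "coord_proj b J = (\<lambda>i i'. \<Sum>j\<in>J. b j i * cnj (b j i'))"

definition orth_proj_rank :: "bool \<Rightarrow> nat \<Rightarrow> nat \<Rightarrow> cmat \<Rightarrow> bool" where
  "orth_proj_rank realF m l P \<longleftrightarrow>
     (\<exists>v :: nat \<Rightarrow> cvec.
        (\<forall>a<l. in_F realF m (v a)) \<and>
        (\<forall>a<l. \<forall>a'<l. inner_F m (v a) (v a') = (if a = a' then 1 else 0)) \<and>
        (\<forall>i<m. \<forall>i'<m. P i i' = (\<Sum>a<l. v a i * cnj (v a i'))))"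

definition fusion_frame :: "bool \<Rightarrow> nat \<Rightarrow> nat \<Rightarrow> nat \<Rightarrow> 'i set \<Rightarrow> ('i \<Rightarrow> cmat) \<Rightarrow> bool" where
  "fusion_frame realF n l m I P \<longleftrightarrow>
     finite I \<and> card I = n \<and> (\<forall>i\<in>I. orth_proj_rank realF m l (P i)) \<and>
     (\<exists>A B. 0 < A \<and> A \<le> B \<and>
        (\<forall>x. in_F realF m x \<longrightarrow>
           A * norm_sq m x \<le> (\<Sum>i\<in>I. norm_sq m (mat_vec m (P i) x)) \<and>
           (\<Sum>i\<in>I. norm_sq m (mat_vec m (P i) x)) \<le> B * norm_sq m x))"

definition unitary_F :: "bool \<Rightarrow> nat \<Rightarrow> cmat \<Rightarrow> bool" where
  "unitary_F realF m U \<longleftrightarrow> mat_in_F realF m U \<and>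
     (\<forall>i<m. \<forall>j<m. (\<Sum>k<m. U i k * cnj (U j k)) = (if i = j then 1 else 0))"

definition conj_by :: "nat \<Rightarrow> cmat \<Rightarrow> cmat \<Rightarrow> cmat" where
  "conj_by m U P = (\<lambda>i j. \<Sum>a<m. \<Sum>b<m. U i a * P a b * cnj (U j b))"

definition tensor :: "cmat \<Rightarrow> cmat \<Rightarrow> (nat \<times> nat) \<Rightarrow> (nat \<times> nat) \<Rightarrow> complex" where
  "tensor A B = (\<lambda>(a, b) (c, d). A a c * B b d)"

definition grassmannian_2_design :: "bool \<Rightarrow> nat \<Rightarrow> 'i set \<Rightarrow> ('i \<Rightarrow> cmat) \<Rightarrow> bool" where
  "grassmannian_2_design realF m I P \<longleftrightarrow>
     (\<forall>U. unitary_F realF m U \<longrightarrow>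
        (\<forall>a<m. \<forall>b<m. \<forall>c<m. \<forall>d<m.
           (\<Sum>i\<in>I. tensor (P i) (P i) (a, b) (c, d)) =
           (\<Sum>i\<in>I. tensor (conj_by m U (P i)) (conj_by m U (P i)) (a, b) (c, d))))"

definition block_design_2 :: "nat \<Rightarrow> nat \<Rightarrow> nat \<Rightarrow> nat set set \<Rightarrow> bool" where
  "block_design_2 m l lam S \<longleftrightarrow>
     (\<forall>J\<in>S. J \<subseteq> {0..<m} \<and> card J = l) \<and>
     (\<forall>p. p \<subseteq> {0..<m} \<and> card p = 2 \<longrightarrow> card {J\<in>S. p \<subseteq> J} = lam)"

end

theory Submission
  imports Defs "HOL-Combinatorics.Transposition"
begin

text \<open>For a maximal set of MUBs the frame operator of the vectors \<open>b\<^sub>k\<^sub>j \<otimes> b\<^sub>k\<^sub>j\<close> is the invariant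
  tensor \<open>\<alpha>(Id + Swap) + \<gamma> vec(I)vec(I)\<^sup>*\<close>: the squared Frobenius distance between the two
  expands into the Gram potential, which unbiasedness determines exactly, a cross term and the
  norm of the tensor, and these cancel. Expanding each coordinate projection in its basis, the
  fourth moment \<open>\<Sum> P \<otimes> P\<close> of the frame is governed by the pair counts
  \<open>n(j,j') = #{J \<in> S. j, j' \<in> J}\<close>. If \<open>S\<close> is a 2-design (replication \<open>m - 1\<close>, index
  \<open>m/2 - 1\<close>) the moment is a combination of \<open>\<delta>\<^sub>a\<^sub>c\<delta>\<^sub>b\<^sub>d\<close> and the invariant tensor, hence
  invariant. Conversely, conjugating by the unitary that permutes one of the bases and testing
  on \<open>b\<^sub>x \<otimes> b\<^sub>y\<close> shows that \<open>n\<close> is invariant under all transpositions, hence constant off the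
  diagonal; the size and rank of the fusion frame give \<open>|S| = 2(m - 1)\<close> and \<open>|J| = m/2\<close>, and
  double counting pairs fixes the index.\<close>

lemma sum_swap_2_1:
  "(\<Sum>x\<in>A. \<Sum>y\<in>B. \<Sum>i\<in>I. f x y i) = (\<Sum>i\<in>I. \<Sum>x\<in>A. \<Sum>y\<in>B. f x y i)"
proof -
  have "(\<Sum>x\<in>A. \<Sum>y\<in>B. \<Sum>i\<in>I. f x y i) = (\<Sum>x\<in>A. \<Sum>i\<in>I. \<Sum>y\<in>B. f x y i)"
    by (rule sum.cong[OF refl], rule sum.swap)
  also have "\<dots> = (\<Sum>i\<in>I. \<Sum>x\<in>A. \<Sum>y\<in>B. f x y i)"
    by (rule sum.swap)
  finally show ?thesis .
qed

lemma sum_swap_2_2: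
  "(\<Sum>x\<in>A. \<Sum>y\<in>B. \<Sum>i\<in>I. \<Sum>i'\<in>I'. f x y i i') = (\<Sum>i\<in>I. \<Sum>i'\<in>I'. \<Sum>x\<in>A. \<Sum>y\<in>B. f x y i i')"
proof -
  have "(\<Sum>x\<in>A. \<Sum>y\<in>B. \<Sum>i\<in>I. \<Sum>i'\<in>I'. f x y i i') = (\<Sum>i\<in>I. \<Sum>x\<in>A. \<Sum>y\<in>B. \<Sum>i'\<in>I'. f x y i i')"
    by (rule sum_swap_2_1)
  also have "\<dots> = (\<Sum>i\<in>I. \<Sum>i'\<in>I'. \<Sum>x\<in>A. \<Sum>y\<in>B. f x y i i')"
    by (rule sum.cong[OF refl], rule sum_swap_2_1)
  finally show ?thesis .
qed

lemma sum_swap_1_4: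
  "(\<Sum>i\<in>I. \<Sum>a\<in>A. \<Sum>b\<in>B. \<Sum>c\<in>C. \<Sum>d\<in>D. f i a b c d)
   = (\<Sum>a\<in>A. \<Sum>b\<in>B. \<Sum>c\<in>C. \<Sum>d\<in>D. \<Sum>i\<in>I. f i a b c d)"
proof -
  have "(\<Sum>i\<in>I. \<Sum>a\<in>A. \<Sum>b\<in>B. \<Sum>c\<in>C. \<Sum>d\<in>D. f i a b c d)
      = (\<Sum>a\<in>A. \<Sum>b\<in>B. \<Sum>i\<in>I. \<Sum>c\<in>C. \<Sum>d\<in>D. f i a b c d)"
    by (rule sum_swap_2_1[symmetric])
  also have "\<dots> = (\<Sum>a\<in>A. \<Sum>b\<in>B. \<Sum>c\<in>C. \<Sum>d\<in>D. \<Sum>i\<in>I. f i a b c d)"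
    by (intro sum.cong refl sum_swap_2_1[symmetric])
  finally show ?thesis .
qed

lemma sum_if_eq_const:
  assumes "finite K" "k \<in> K"
  shows "(\<Sum>k'\<in>K. if k = k' then a else b) = a + of_nat (card K - 1) * (b :: 'a :: comm_ring_1)"
proof -
  have "(\<Sum>k'\<in>K. if k = k' then a else b) = (\<Sum>k'\<in>K. b + (if k = k' then a - b else 0))"
    by (rule sum.cong) auto
  also have "\<dots> = of_nat (card K) * b + (a - b)"
    using assms by (simp add: sum.distrib)
  also have "\<dots> = a + of_nat (card K - 1) * b"
    using assms by (cases "card K") (auto simp: algebra_simps card_gt_0_iff)
  finally show ?thesis .
qed

lemma sum_if_card_filter:
  "finite S \<Longrightarrow> (\<Sum>J\<in>S. if P J then x else 0) = of_nat (card {J\<in>S. P J}) * (x :: 'a :: semiring_1)"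
  using sum.inter_filter[of S "\<lambda>_. x" P] by simp

lemma if0_mult: "(if P then a else 0) * (b::'a::mult_zero) = (if P then a * b else 0)" by simp
lemma mult_if0: "(b::'a::mult_zero) * (if P then a else 0) = (if P then b * a else 0)" by simp
lemma sum_if0: "(\<Sum>x\<in>A. if P then f x else 0) = (if P then sum f A else 0)" by simp
lemmas delta_simps = if0_mult mult_if0 sum_if0

section \<open>Frame potentials\<close>

lemma sum_cnj_mult_self_eq_0_imp:
  fixes M :: "'d \<Rightarrow> 'd \<Rightarrow> complex"
  assumes "finite D" and "(\<Sum>x\<in>D. \<Sum>y\<in>D. M x y * cnj (M x y)) = 0" and "x \<in> D" "y \<in> D"
  shows "M x y = 0"
proof -
  have "complex_of_real (\<Sum>x\<in>D. \<Sum>y\<in>D. (cmod (M x y))\<^sup>2) = 0"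
    using assms(2) unfolding of_real_sum complex_norm_square .
  then have "(\<Sum>x\<in>D. \<Sum>y\<in>D. (cmod (M x y))\<^sup>2) = 0"
    by (simp only: of_real_eq_0_iff)
  with assms show ?thesis
    by (simp add: sum_nonneg_eq_0_iff sum_nonneg)
qed

lemma frobenius_norm_frame_operator_diff:
  fixes u :: "'i \<Rightarrow> 'd \<Rightarrow> complex" and R :: "'d \<Rightarrow> 'd \<Rightarrow> complex" and I :: "'i set"
  defines "T \<equiv> \<lambda>x y. \<Sum>i\<in>I. u i x * cnj (u i y)"
  shows "(\<Sum>x\<in>D. \<Sum>y\<in>D. (T x y - R x y) * cnj (T x y - R x y))
    = (\<Sum>i\<in>I. \<Sum>i'\<in>I. (\<Sum>x\<in>D. u i x * cnj (u i' x)) * cnj (\<Sum>x\<in>D. u i x * cnj (u i' x)))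
      - (\<Sum>i\<in>I. \<Sum>x\<in>D. \<Sum>y\<in>D. cnj (u i x) * R x y * u i y)
      - cnj (\<Sum>i\<in>I. \<Sum>x\<in>D. \<Sum>y\<in>D. cnj (u i x) * R x y * u i y)
      + (\<Sum>x\<in>D. \<Sum>y\<in>D. R x y * cnj (R x y))"
proof -
  have split: "\<And>x y. (T x y - R x y) * cnj (T x y - R x y)
     = T x y * cnj (T x y) - R x y * cnj (T x y) - T x y * cnj (R x y) + R x y * cnj (R x y)"
    by (simp add: algebra_simps)
  have TT: "\<And>x y. T x y * cnj (T x y) = (\<Sum>i\<in>I. \<Sum>i'\<in>I. (u i x * cnj (u i' x)) * (cnj (u i y) * u i' y))"
    unfolding T_def
    by (simp only: cnj_sum sum_product complex_cnj_mult complex_cnj_cnj) (intro sum.cong refl, simp add: mult_ac)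
  have gram: "\<And>i i'. (\<Sum>x\<in>D. \<Sum>y\<in>D. (u i x * cnj (u i' x)) * (cnj (u i y) * u i' y))
     = (\<Sum>x\<in>D. u i x * cnj (u i' x)) * cnj (\<Sum>x\<in>D. u i x * cnj (u i' x))"
    by (simp only: cnj_sum sum_product complex_cnj_mult complex_cnj_cnj)
  have RT: "\<And>x y. R x y * cnj (T x y) = (\<Sum>i\<in>I. cnj (u i x) * R x y * u i y)"
    unfolding T_def
    by (simp only: cnj_sum sum_distrib_left complex_cnj_mult complex_cnj_cnj) (intro sum.cong refl, simp add: mult_ac)
  have TT_sum: "(\<Sum>x\<in>D. \<Sum>y\<in>D. T x y * cnj (T x y))
     = (\<Sum>i\<in>I. \<Sum>i'\<in>I. (\<Sum>x\<in>D. u i x * cnj (u i' x)) * cnj (\<Sum>x\<in>D. u i x * cnj (u i' x)))"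
  proof -
    have "(\<Sum>x\<in>D. \<Sum>y\<in>D. T x y * cnj (T x y))
        = (\<Sum>x\<in>D. \<Sum>y\<in>D. \<Sum>i\<in>I. \<Sum>i'\<in>I. (u i x * cnj (u i' x)) * (cnj (u i y) * u i' y))"
      by (simp only: TT)
    also have "\<dots> = (\<Sum>i\<in>I. \<Sum>i'\<in>I. \<Sum>x\<in>D. \<Sum>y\<in>D. (u i x * cnj (u i' x)) * (cnj (u i y) * u i' y))"
      by (rule sum_swap_2_2)
    finally show ?thesis
      by (simp only: gram)
  qed
  have RT_sum: "(\<Sum>x\<in>D. \<Sum>y\<in>D. R x y * cnj (T x y)) = (\<Sum>i\<in>I. \<Sum>x\<in>D. \<Sum>y\<in>D. cnj (u i x) * R x y * u i y)"
    by (simp only: RT) (rule sum_swap_2_1)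
  have TR: "(\<Sum>x\<in>D. \<Sum>y\<in>D. T x y * cnj (R x y)) = cnj (\<Sum>x\<in>D. \<Sum>y\<in>D. R x y * cnj (T x y))"
    by (simp only: cnj_sum complex_cnj_mult complex_cnj_cnj mult.commute)
  show ?thesis
    unfolding split sum.distrib sum_subtractf TR TT_sum RT_sum ..
qed

lemma frame_operator_eqI:
  fixes u :: "'i \<Rightarrow> 'd \<Rightarrow> complex" and R :: "'d \<Rightarrow> 'd \<Rightarrow> complex"
  assumes "finite D" and "s \<in> \<real>"
    and "(\<Sum>i\<in>I. \<Sum>i'\<in>I. (\<Sum>x\<in>D. u i x * cnj (u i' x)) * cnj (\<Sum>x\<in>D. u i x * cnj (u i' x))) = s"
    and "(\<Sum>i\<in>I. \<Sum>x\<in>D. \<Sum>y\<in>D. cnj (u i x) * R x y * u i y) = s"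
    and "(\<Sum>x\<in>D. \<Sum>y\<in>D. R x y * cnj (R x y)) = s"
    and "x \<in> D" "y \<in> D"
  shows "(\<Sum>i\<in>I. u i x * cnj (u i y)) = R x y"
proof -
  let ?M = "\<lambda>x y. (\<Sum>i\<in>I. u i x * cnj (u i y)) - R x y"
  have "(\<Sum>x\<in>D. \<Sum>y\<in>D. ?M x y * cnj (?M x y)) = 0"
    unfolding frobenius_norm_frame_operator_diff assms(3-5)
    using \<open>s \<in> \<real>\<close> by (simp add: Reals_cnj_iff)
  from sum_cnj_mult_self_eq_0_imp[OF \<open>finite D\<close> this \<open>x \<in> D\<close> \<open>y \<in> D\<close>] show ?thesis
    by simp
qed

lemma orthonormal_basis_inner:
  assumes "orthonormal_basis realF m b" "j < m" "j' < m"
  shows "(\<Sum>x<m. b j x * cnj (b j' x)) = (if j = j' then 1 else 0)"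
  using assms unfolding orthonormal_basis_def inner_F_def by blast

text \<open>Completeness via the frame-potential identity with \<open>R = I\<close>.\<close>
lemma orthonormal_basis_complete:
  assumes onb: "orthonormal_basis realF m b" and "a < m" "c < m"
  shows "(\<Sum>j<m. b j a * cnj (b j c)) = (if a = c then 1 else 0)"
proof -
  let ?R = "\<lambda>x y::nat. (if x = y then 1 else 0) :: complex"
  have inner: "\<And>j j'. j \<in> {..<m} \<Longrightarrow> j' \<in> {..<m} \<Longrightarrow> (\<Sum>x<m. b j x * cnj (b j' x)) = ?R j j'"
    using orthonormal_basis_inner[OF onb] by simp
  have "(\<Sum>j<m. \<Sum>j'<m. (\<Sum>x<m. b j x * cnj (b j' x)) * cnj (\<Sum>x<m. b j x * cnj (b j' x))) = of_nat m"
    by (simp only: inner cong: sum.cong) (simp add: delta_simps)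
  moreover have "(\<Sum>j<m. \<Sum>x<m. \<Sum>y<m. cnj (b j x) * ?R x y * b j y) = of_nat m"
  proof -
    have "(\<Sum>j<m. \<Sum>x<m. \<Sum>y<m. cnj (b j x) * ?R x y * b j y) = (\<Sum>j<m. \<Sum>x<m. b j x * cnj (b j x))"
      by (simp add: delta_simps mult.commute)
    also have "\<dots> = of_nat m"
      by (simp add: inner)
    finally show ?thesis .
  qed
  moreover have "(\<Sum>x<m. \<Sum>y<m. ?R x y * cnj (?R x y)) = of_nat m"
    by (simp add: delta_simps)
  ultimately show ?thesis
    using assms by (intro frame_operator_eqI[where s = "of_nat m"]) auto
qed

lemma coord_proj_trace:
  assumes onb: "orthonormal_basis realF m b" and J: "J \<subseteq> {..<m}"
  shows "(\<Sum>i<m. coord_proj b J i i) = of_nat (card J)"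
proof -
  have "(\<Sum>i<m. coord_proj b J i i) = (\<Sum>j\<in>J. \<Sum>i<m. b j i * cnj (b j i))"
    unfolding coord_proj_def by (rule sum.swap)
  also have "\<dots> = (\<Sum>j\<in>J. 1)"
    using J orthonormal_basis_inner[OF onb] by (intro sum.cong refl) auto
  finally show ?thesis by simp
qed

lemma orth_proj_rank_trace:
  assumes "orth_proj_rank realF m l P"
  shows "(\<Sum>i<m. P i i) = of_nat l"
proof -
  obtain v where v: "\<forall>a<l. \<forall>a'<l. inner_F m (v a) (v a') = (if a = a' then 1 else 0)"
    "\<forall>i<m. \<forall>i'<m. P i i' = (\<Sum>a<l. v a i * cnj (v a i'))"
    using assms unfolding orth_proj_rank_def by blast
  have "(\<Sum>i<m. P i i) = (\<Sum>i<m. \<Sum>a<l. v a i * cnj (v a i))" using v(2) by simp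
  also have "\<dots> = (\<Sum>a<l. inner_F m (v a) (v a))" unfolding inner_F_def by (rule sum.swap)
  also have "\<dots> = (\<Sum>a<l. 1)" using v(1) by simp
  finally show ?thesis by simp
qed

section \<open>Invariant tensors and maximal sets of MUBs\<close>

text \<open>As a map on \<open>F\<^sup>m \<otimes> F\<^sup>m\<close> this is \<open>\<alpha> Id + \<beta> Swap + \<gamma> vec(I) vec(I)\<^sup>*\<close>, the general
  form of a tensor commuting with all \<open>U \<otimes> U\<close> (\<open>\<gamma> = 0\<close> in the unitary case).\<close>
definition iso_tensor :: "complex \<Rightarrow> complex \<Rightarrow> complex \<Rightarrow> nat \<Rightarrow> nat \<Rightarrow> nat \<Rightarrow> nat \<Rightarrow> complex" where
  "iso_tensor \<alpha> \<beta> \<gamma> a b c d =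
     (if b = d then (if a = c then \<alpha> else 0) else 0) + (if a = d then (if b = c then \<beta> else 0) else 0)
     + (if c = d then (if a = b then \<gamma> else 0) else 0)"

lemma iso_tensor_frobenius_norm:
  "(\<Sum>a<m. \<Sum>b<m. \<Sum>c<m. \<Sum>d<m. iso_tensor \<alpha> \<beta> \<gamma> a b c d * cnj (iso_tensor \<alpha> \<beta> \<gamma> a b c d))
   = of_nat m ^ 2 * (\<alpha> * cnj \<alpha> + \<beta> * cnj \<beta> + \<gamma> * cnj \<gamma>)
     + of_nat m * (\<alpha> * cnj \<beta> + \<beta> * cnj \<alpha> + \<alpha> * cnj \<gamma> + \<gamma> * cnj \<alpha> + \<beta> * cnj \<gamma> + \<gamma> * cnj \<beta>)"
  unfolding iso_tensor_def
  by (simp add: algebra_simps sum.distrib delta_simps if_distrib[of cnj] power2_eq_square cong: if_cong)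

lemma iso_tensor_quad_form:
  assumes unit: "(\<Sum>a<m. v a * cnj (v a)) = 1" and real: "\<gamma> \<noteq> 0 \<Longrightarrow> \<forall>a<m. cnj (v a) = v a"
  shows "(\<Sum>a<m. \<Sum>b<m. \<Sum>c<m. \<Sum>d<m. cnj (v a * v b) * iso_tensor \<alpha> \<beta> \<gamma> a b c d * (v c * v d))
    = \<alpha> + \<beta> + \<gamma>"
proof -
  have sq: "(\<Sum>a<m. \<Sum>b<m. cnj (v a) * cnj (v b) * (v a * v b)) = 1"
  proof -
    have "(\<Sum>a<m. \<Sum>b<m. cnj (v a) * cnj (v b) * (v a * v b))
        = (\<Sum>a<m. v a * cnj (v a)) * (\<Sum>a<m. v a * cnj (v a))"
      by (simp add: sum_product mult_ac)
    then show ?thesis using unit by simp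
  qed
  have trace: "\<gamma> * (\<Sum>a<m. \<Sum>c<m. cnj (v a) * cnj (v a) * (v c * v c)) = \<gamma>"
  proof (cases "\<gamma> = 0")
    case False
    have "(\<Sum>a<m. \<Sum>c<m. cnj (v a) * cnj (v a) * (v c * v c))
        = (\<Sum>a<m. v a * cnj (v a)) * (\<Sum>a<m. v a * cnj (v a))"
      using real[OF False] by (simp add: sum_product mult_ac)
    then show ?thesis using unit by simp
  qed simp
  have "(\<Sum>a<m. \<Sum>b<m. \<Sum>c<m. \<Sum>d<m. cnj (v a * v b) * iso_tensor \<alpha> \<beta> \<gamma> a b c d * (v c * v d))
     = \<alpha> * (\<Sum>a<m. \<Sum>b<m. cnj (v a) * cnj (v b) * (v a * v b))
       + \<beta> * (\<Sum>a<m. \<Sum>b<m. cnj (v a) * cnj (v b) * (v a * v b))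
       + \<gamma> * (\<Sum>a<m. \<Sum>c<m. cnj (v a) * cnj (v a) * (v c * v c))"
    unfolding iso_tensor_def by (simp add: algebra_simps sum.distrib delta_simps sum_distrib_left)
  then show ?thesis using sq trace by simp
qed

lemma iso_tensor_conj_unitary:
  assumes U: "unitary_F realF m U" and real: "\<gamma> \<noteq> 0 \<Longrightarrow> realF"
    and abcd: "a < m" "b < m" "c < m" "d < m"
  shows "(\<Sum>a'<m. \<Sum>b'<m. \<Sum>c'<m. \<Sum>d'<m.
            (U a a' * cnj (U c c') * U b b' * cnj (U d d')) * iso_tensor \<alpha> \<beta> \<gamma> a' b' c' d')
     = iso_tensor \<alpha> \<beta> \<gamma> a b c d"
proof -
  have rows: "\<And>i j. i < m \<Longrightarrow> j < m \<Longrightarrow> (\<Sum>k<m. U i k * cnj (U j k)) = (if i = j then 1 else 0)"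
    using U unfolding unitary_F_def by blast
  have expand: "(\<Sum>a'<m. \<Sum>b'<m. \<Sum>c'<m. \<Sum>d'<m.
        (U a a' * cnj (U c c') * U b b' * cnj (U d d')) * iso_tensor \<alpha> \<beta> \<gamma> a' b' c' d')
     = \<alpha> * ((\<Sum>k<m. U a k * cnj (U c k)) * (\<Sum>k<m. U b k * cnj (U d k)))
     + \<beta> * ((\<Sum>k<m. U a k * cnj (U d k)) * (\<Sum>k<m. U b k * cnj (U c k)))
     + \<gamma> * ((\<Sum>k<m. U a k * U b k) * (\<Sum>k<m. cnj (U c k) * cnj (U d k)))"
    unfolding iso_tensor_def sum_product
    by (simp add: algebra_simps sum.distrib delta_simps sum_distrib_left)
  have trace: "\<gamma> * ((\<Sum>k<m. U a k * U b k) * (\<Sum>k<m. cnj (U c k) * cnj (U d k)))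
     = \<gamma> * ((if a = b then 1 else 0) * (if c = d then 1 else 0))"
  proof (cases "\<gamma> = 0")
    case False
    then have "\<And>i k. i < m \<Longrightarrow> k < m \<Longrightarrow> cnj (U i k) = U i k"
      using real U unfolding unitary_F_def mat_in_F_def by (auto simp: Reals_cnj_iff)
    then have "(\<Sum>k<m. U a k * U b k) = (\<Sum>k<m. U a k * cnj (U b k))"
      and "(\<Sum>k<m. cnj (U c k) * cnj (U d k)) = (\<Sum>k<m. U c k * cnj (U d k))"
      using abcd by (auto intro: sum.cong)
    then show ?thesis using rows abcd by simp
  qed simp
  show ?thesis
    unfolding expand trace using rows abcd unfolding iso_tensor_def by simp
qed

definition mub_\<alpha> :: "bool \<Rightarrow> complex" where
  "mub_\<alpha> realF = (if realF then 1/2 else 1)"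

definition mub_\<gamma> :: "bool \<Rightarrow> complex" where
  "mub_\<gamma> realF = (if realF then 1/2 else 0)"

lemma MUB_sum_inner_pow4:
  fixes B :: "'k \<Rightarrow> nat \<Rightarrow> cvec"
  assumes MUB: "MUB_set realF m K B" and finK: "finite K" and m: "0 < m"
  shows "(\<Sum>k\<in>K. \<Sum>j<m. \<Sum>k'\<in>K. \<Sum>j'<m. (cmod (inner_F m (B k j) (B k' j'))) ^ 4)
    = real (card K) * (real m + real (card K) - 1)"
proof -
  have entry: "(cmod (inner_F m (B k j) (B k' j'))) ^ 4
      = (if k = k' then (if j = j' then 1 else 0) else 1 / real m ^ 2)"
    if kj: "k \<in> K" "k' \<in> K" "j < m" "j' < m" for k j k' j'
  proof (cases "k = k'")
    case True
    have "orthonormal_basis realF m (B k)"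
      using MUB kj(1) unfolding MUB_set_def by blast
    with True kj show ?thesis
      unfolding orthonormal_basis_def by simp
  next
    case False
    then have "(cmod (inner_F m (B k j) (B k' j')))\<^sup>2 = 1 / real m"
      using MUB kj unfolding MUB_set_def mutually_unbiased_def by blast
    then have "(cmod (inner_F m (B k j) (B k' j'))) ^ 4 = (1 / real m)\<^sup>2"
      by (metis power_mult numeral_Bit0 numeral_One mult_2 one_add_one)
    with False show ?thesis
      by (simp add: power_divide)
  qed
  have "(\<Sum>k\<in>K. \<Sum>j<m. \<Sum>k'\<in>K. \<Sum>j'<m. (cmod (inner_F m (B k j) (B k' j'))) ^ 4)
      = (\<Sum>k\<in>K. \<Sum>j<m. \<Sum>k'\<in>K. \<Sum>j'<m. (if k = k' then (if j = j' then 1 else 0) else 1 / real m ^ 2))"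
    by (intro sum.cong refl) (simp add: entry)
  also have "\<dots> = (\<Sum>k\<in>K. \<Sum>j<m. \<Sum>k'\<in>K. (if k = k' then 1 else 1 / real m))"
    using m by (intro sum.cong refl) (auto simp: power2_eq_square)
  also have "\<dots> = (\<Sum>k\<in>K. \<Sum>j<m. 1 + real (card K - 1) * (1 / real m))"
    using finK by (intro sum.cong refl sum_if_eq_const) auto
  also have "\<dots> = real (card K) * (real m + real (card K) - 1)"
    using m by (cases "card K") (simp_all add: field_simps)
  finally show ?thesis .
qed

lemma mub_potentials_agree:
  assumes "realF \<Longrightarrow> even m"
  defines "\<alpha> \<equiv> mub_\<alpha> realF" and "\<gamma> \<equiv> mub_\<gamma> realF" and "k \<equiv> of_nat (kF realF m)"
  shows "k * (of_nat m + k - 1) = k * of_nat m * (2 * \<alpha> + \<gamma>)" (is ?gram)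
    and "of_nat m ^ 2 * (\<alpha> * cnj \<alpha> + \<alpha> * cnj \<alpha> + \<gamma> * cnj \<gamma>)
      + of_nat m * (\<alpha> * cnj \<alpha> + \<alpha> * cnj \<alpha> + \<alpha> * cnj \<gamma> + \<gamma> * cnj \<alpha> + \<alpha> * cnj \<gamma> + \<gamma> * cnj \<alpha>)
      = k * of_nat m * (2 * \<alpha> + \<gamma>)" (is ?norm)
proof -
  have "?gram \<and> ?norm"
  proof (cases realF)
    case True
    then obtain t where "m = 2 * t"
      using assms(1) by blast
    with True show ?thesis
      unfolding assms(2-) kF_def mub_\<alpha>_def mub_\<gamma>_def by (simp add: field_simps power2_eq_square)
  qed (simp add: assms(2-) kF_def mub_\<alpha>_def mub_\<gamma>_def field_simps power2_eq_square)
  then show ?gram ?norm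
    by simp_all
qed

text \<open>With \<open>u\<^sub>k\<^sub>j = b\<^sub>k\<^sub>j \<otimes> b\<^sub>k\<^sub>j\<close> the Gram potential is \<open>MUB_sum_inner_pow4\<close>, and the number
  \<open>k\<^sub>F(m)\<close> of bases is what makes it agree with the other two potentials of
  \<open>frame_operator_eqI\<close>.\<close>
lemma maximal_MUB_fourth_moment:
  fixes B :: "'k \<Rightarrow> nat \<Rightarrow> cvec"
  assumes MUB: "maximal_MUB_set realF m K B" and m: "0 < m" "realF \<Longrightarrow> even m"
    and abcd: "a < m" "b < m" "c < m" "d < m"
  shows "(\<Sum>k\<in>K. \<Sum>j<m. B k j a * cnj (B k j c) * (B k j b * cnj (B k j d)))
         = iso_tensor (mub_\<alpha> realF) (mub_\<alpha> realF) (mub_\<gamma> realF) a b c d"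
proof -
  let ?\<alpha> = "mub_\<alpha> realF" and ?\<gamma> = "mub_\<gamma> realF"
  define D where "D = {..<m} \<times> {..<m}"
  define u where "u = (\<lambda>(k, j) (a::nat, b::nat). B k j a * B k j b)"
  define R where "R = (\<lambda>(a, b) (c, d). iso_tensor ?\<alpha> ?\<alpha> ?\<gamma> a b c d)"
  define s where "s = of_nat (card K) * of_nat m * (2 * ?\<alpha> + ?\<gamma>)"
  have MUB': "MUB_set realF m K B" and finK: "finite K" and cK: "card K = kF realF m"
    using MUB unfolding maximal_MUB_set_def by blast+
  have s_eq: "of_nat (card K) * (of_nat m + of_nat (card K) - 1) = s"
    "of_nat m ^ 2 * (?\<alpha> * cnj ?\<alpha> + ?\<alpha> * cnj ?\<alpha> + ?\<gamma> * cnj ?\<gamma>)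
      + of_nat m * (?\<alpha> * cnj ?\<alpha> + ?\<alpha> * cnj ?\<alpha> + ?\<alpha> * cnj ?\<gamma> + ?\<gamma> * cnj ?\<alpha> + ?\<alpha> * cnj ?\<gamma> + ?\<gamma> * cnj ?\<alpha>) = s"
    unfolding s_def cK using mub_potentials_agree[OF m(2)] by simp_all
  have gram_entry: "(\<Sum>x\<in>D. u (k, j) x * cnj (u (k', j') x)) * cnj (\<Sum>x\<in>D. u (k, j) x * cnj (u (k', j') x))
      = complex_of_real ((cmod (inner_F m (B k j) (B k' j'))) ^ 4)" for k j k' j'
  proof -
    let ?z = "inner_F m (B k j) (B k' j')"
    have "(\<Sum>x\<in>D. u (k, j) x * cnj (u (k', j') x)) = ?z * ?z"
      unfolding D_def u_def inner_F_def by (simp add: sum.cartesian_product' sum_product mult_ac)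
    then have "(\<Sum>x\<in>D. u (k, j) x * cnj (u (k', j') x)) * cnj (\<Sum>x\<in>D. u (k, j) x * cnj (u (k', j') x))
       = (?z * cnj ?z) ^ 2"
      by (simp only: complex_cnj_mult power2_eq_square mult_ac)
    also have "\<dots> = complex_of_real ((cmod ?z)\<^sup>2) ^ 2"
      by (simp only: complex_norm_square)
    finally show ?thesis
      by simp
  qed
  have gram: "(\<Sum>i\<in>K \<times> {..<m}. \<Sum>i'\<in>K \<times> {..<m}.
      (\<Sum>x\<in>D. u i x * cnj (u i' x)) * cnj (\<Sum>x\<in>D. u i x * cnj (u i' x))) = s"
    using MUB_sum_inner_pow4[OF MUB' finK m(1)] s_eq(1)
    unfolding sum.cartesian_product' gram_entry of_real_sum[symmetric] by simp
  have "(\<Sum>x\<in>D. \<Sum>y\<in>D. cnj (u (k, j) x) * R x y * u (k, j) y) = 2 * ?\<alpha> + ?\<gamma>"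
    if kj: "k \<in> K" "j < m" for k j
  proof -
    have onb: "orthonormal_basis realF m (B k)"
      using MUB' kj(1) unfolding MUB_set_def by blast
    have unit: "(\<Sum>a<m. B k j a * cnj (B k j a)) = 1"
      using orthonormal_basis_inner[OF onb kj(2) kj(2)] by simp
    have real: "?\<gamma> \<noteq> 0 \<Longrightarrow> \<forall>a<m. cnj (B k j a) = B k j a"
      using onb kj(2) unfolding mub_\<gamma>_def orthonormal_basis_def in_F_def
      by (auto simp: Reals_cnj_iff split: if_splits)
    show ?thesis
      using iso_tensor_quad_form[of "B k j" m ?\<gamma> ?\<alpha> ?\<alpha>, OF unit real]
      unfolding D_def sum.cartesian_product' u_def R_def by simp
  qed
  then have quad: "(\<Sum>i\<in>K \<times> {..<m}. \<Sum>x\<in>D. \<Sum>y\<in>D. cnj (u i x) * R x y * u i y) = s"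
    unfolding s_def sum.cartesian_product' by simp
  have norm: "(\<Sum>x\<in>D. \<Sum>y\<in>D. R x y * cnj (R x y)) = s"
    unfolding D_def sum.cartesian_product' R_def using iso_tensor_frobenius_norm s_eq(2) by simp
  have "s \<in> \<real>"
    unfolding s_def mub_\<alpha>_def mub_\<gamma>_def by simp
  moreover have "(a, b) \<in> D" "(c, d) \<in> D"
    using abcd unfolding D_def by auto
  ultimately have "(\<Sum>i\<in>K \<times> {..<m}. u i (a, b) * cnj (u i (c, d))) = R (a, b) (c, d)"
    using frame_operator_eqI[OF _ _ gram quad norm] unfolding D_def by blast
  then show ?thesis
    unfolding sum.cartesian_product' u_def R_def by (simp add: mult_ac)
qed

section \<open>Frames of coordinate projections\<close>

definition pair_count :: "nat set set \<Rightarrow> nat \<Rightarrow> nat \<Rightarrow> nat" where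
  "pair_count S x y = card {J\<in>S. x \<in> J \<and> y \<in> J}"

lemma coord_proj_eq_sum_indicator:
  assumes "J \<subseteq> {..<m}"
  shows "coord_proj b J a c = (\<Sum>j<m. if j \<in> J then b j a * cnj (b j c) else 0)"
proof -
  have "J = {..<m} \<inter> J" using assms by blast
  then have "coord_proj b J a c = (\<Sum>j\<in>{..<m} \<inter> J. b j a * cnj (b j c))"
    unfolding coord_proj_def by simp
  then show ?thesis
    by (simp add: sum.inter_restrict)
qed

lemma sum_coord_proj_products:
  assumes finS: "finite S" and S: "\<forall>J\<in>S. J \<subseteq> {..<m}"
  shows "(\<Sum>J\<in>S. coord_proj b J a c * coord_proj b J a' c')
    = (\<Sum>j<m. \<Sum>j'<m. of_nat (pair_count S j j') * (b j a * cnj (b j c) * (b j' a' * cnj (b j' c'))))"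
proof -
  let ?Q = "\<lambda>j j'. b j a * cnj (b j c) * (b j' a' * cnj (b j' c'))"
  have "(\<Sum>J\<in>S. coord_proj b J a c * coord_proj b J a' c')
     = (\<Sum>J\<in>S. \<Sum>j<m. \<Sum>j'<m. if j \<in> J \<and> j' \<in> J then ?Q j j' else 0)"
  proof (rule sum.cong[OF refl])
    fix J assume "J \<in> S"
    then have J: "J \<subseteq> {..<m}" using S by blast
    show "coord_proj b J a c * coord_proj b J a' c'
        = (\<Sum>j<m. \<Sum>j'<m. if j \<in> J \<and> j' \<in> J then ?Q j j' else 0)"
      unfolding coord_proj_eq_sum_indicator[OF J] sum_product by (intro sum.cong refl) simp
  qed
  also have "\<dots> = (\<Sum>j<m. \<Sum>j'<m. \<Sum>J\<in>S. if j \<in> J \<and> j' \<in> J then ?Q j j' else 0)"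
    by (rule sum_swap_2_1[symmetric])
  also have "\<dots> = (\<Sum>j<m. \<Sum>j'<m. of_nat (pair_count S j j') * ?Q j j')"
    unfolding pair_count_def using finS by (simp only: sum_if_card_filter)
  finally show ?thesis .
qed

text \<open>Each basis contributes \<open>lam \<delta>\<^sub>a\<^sub>c \<delta>\<^sub>b\<^sub>d\<close> plus \<open>r - lam\<close> times its own fourth moment, and
  the fourth moments of the bases add up to an invariant tensor.\<close>
lemma coord_frame_fourth_moment:
  fixes B :: "'k \<Rightarrow> nat \<Rightarrow> cvec"
  assumes MUB: "maximal_MUB_set realF m K B" and m: "0 < m" "realF \<Longrightarrow> even m"
    and finS: "finite S" and S: "\<forall>J\<in>S. J \<subseteq> {..<m}"
    and counts: "\<forall>j<m. \<forall>j'<m. pair_count S j j' = (if j = j' then r else lam)"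
    and abcd: "a < m" "b < m" "c < m" "d < m"
  shows "(\<Sum>i\<in>K \<times> S. tensor ((\<lambda>(k, J). coord_proj (B k) J) i) ((\<lambda>(k, J). coord_proj (B k) J) i) (a, b) (c, d))
    = iso_tensor (of_nat (card K) * of_nat lam + (of_nat r - of_nat lam) * mub_\<alpha> realF)
        ((of_nat r - of_nat lam) * mub_\<alpha> realF) ((of_nat r - of_nat lam) * mub_\<gamma> realF) a b c d"
proof -
  let ?l = "of_nat lam :: complex" and ?r = "of_nat r :: complex"
  let ?\<delta> = "(if a = c then 1 else 0) * (if b = d then 1 else 0) :: complex"
  let ?M = "\<lambda>k. \<Sum>j<m. B k j a * cnj (B k j c) * (B k j b * cnj (B k j d))"
  have onb: "\<And>k. k \<in> K \<Longrightarrow> orthonormal_basis realF m (B k)"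
    using MUB unfolding maximal_MUB_set_def MUB_set_def by blast
  have basis: "(\<Sum>J\<in>S. coord_proj (B k) J a c * coord_proj (B k) J b d) = ?l * ?\<delta> + (?r - ?l) * ?M k"
    if k: "k \<in> K" for k
  proof -
    let ?Q = "\<lambda>j j'. B k j a * cnj (B k j c) * (B k j' b * cnj (B k j' d))"
    have "(\<Sum>J\<in>S. coord_proj (B k) J a c * coord_proj (B k) J b d)
        = (\<Sum>j<m. \<Sum>j'<m. of_nat (pair_count S j j') * ?Q j j')"
      by (rule sum_coord_proj_products[OF finS S])
    also have "\<dots> = (\<Sum>j<m. \<Sum>j'<m. ?l * ?Q j j' + (if j = j' then (?r - ?l) * ?Q j j' else 0))"
      using counts by (intro sum.cong refl) (auto simp: algebra_simps)
    also have "\<dots> = ?l * (\<Sum>j<m. \<Sum>j'<m. ?Q j j') + (?r - ?l) * ?M k"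
      by (simp add: sum.distrib sum_distrib_left)
    also have "(\<Sum>j<m. \<Sum>j'<m. ?Q j j') = (\<Sum>j<m. B k j a * cnj (B k j c)) * (\<Sum>j<m. B k j b * cnj (B k j d))"
      by (simp add: sum_product)
    also have "\<dots> = ?\<delta>"
      using orthonormal_basis_complete[OF onb[OF k]] abcd by simp
    finally show ?thesis .
  qed
  have "(\<Sum>i\<in>K \<times> S. tensor ((\<lambda>(k, J). coord_proj (B k) J) i) ((\<lambda>(k, J). coord_proj (B k) J) i) (a, b) (c, d))
     = (\<Sum>k\<in>K. \<Sum>J\<in>S. coord_proj (B k) J a c * coord_proj (B k) J b d)"
    unfolding sum.cartesian_product' tensor_def by simp
  also have "\<dots> = (\<Sum>k\<in>K. ?l * ?\<delta> + (?r - ?l) * ?M k)"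
    using basis by (rule sum.cong[OF refl])
  also have "\<dots> = of_nat (card K) * ?l * ?\<delta> + (?r - ?l) * (\<Sum>k\<in>K. ?M k)"
    by (simp add: sum.distrib sum_distrib_left)
  also have "\<dots> = of_nat (card K) * ?l * ?\<delta>
      + (?r - ?l) * iso_tensor (mub_\<alpha> realF) (mub_\<alpha> realF) (mub_\<gamma> realF) a b c d"
    using maximal_MUB_fourth_moment[OF MUB m abcd] by simp
  also have "\<dots> = iso_tensor (of_nat (card K) * ?l + (?r - ?l) * mub_\<alpha> realF)
      ((?r - ?l) * mub_\<alpha> realF) ((?r - ?l) * mub_\<gamma> realF) a b c d"
    unfolding iso_tensor_def by (simp add: algebra_simps)
  finally show ?thesis .
qed

lemma sum_tensor_conj_by:
  "(\<Sum>i\<in>I. tensor (conj_by m U (P i)) (conj_by m U (P i)) (a, b) (c, d))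
   = (\<Sum>a'<m. \<Sum>b'<m. \<Sum>c'<m. \<Sum>d'<m.
        (U a a' * cnj (U c c') * U b b' * cnj (U d d')) * (\<Sum>i\<in>I. P i a' c' * P i b' d'))"
proof -
  have "\<And>i. tensor (conj_by m U (P i)) (conj_by m U (P i)) (a, b) (c, d)
     = (\<Sum>a'<m. \<Sum>b'<m. \<Sum>c'<m. \<Sum>d'<m.
          (U a a' * cnj (U c c') * U b b' * cnj (U d d')) * (P i a' c' * P i b' d'))"
    unfolding tensor_def conj_by_def
    by (simp only: split sum_product) (intro sum.cong refl, simp add: mult_ac)
  then have "(\<Sum>i\<in>I. tensor (conj_by m U (P i)) (conj_by m U (P i)) (a, b) (c, d))
     = (\<Sum>i\<in>I. \<Sum>a'<m. \<Sum>b'<m. \<Sum>c'<m. \<Sum>d'<m.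
          (U a a' * cnj (U c c') * U b b' * cnj (U d d')) * (P i a' c' * P i b' d'))"
    by simp
  also have "\<dots> = (\<Sum>a'<m. \<Sum>b'<m. \<Sum>c'<m. \<Sum>d'<m. \<Sum>i\<in>I.
          (U a a' * cnj (U c c') * U b b' * cnj (U d d')) * (P i a' c' * P i b' d'))"
    by (rule sum_swap_1_4)
  finally show ?thesis
    by (simp only: sum_distrib_left)
qed

lemma grassmannian_2_design_if_iso_tensor:
  assumes moment: "\<And>a b c d. a < m \<Longrightarrow> b < m \<Longrightarrow> c < m \<Longrightarrow> d < m \<Longrightarrow>
      (\<Sum>i\<in>I. tensor (P i) (P i) (a, b) (c, d)) = iso_tensor \<alpha> \<beta> \<gamma> a b c d"
    and real: "\<gamma> \<noteq> 0 \<Longrightarrow> realF"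
  shows "grassmannian_2_design realF m I P"
  unfolding grassmannian_2_design_def
proof (intro allI impI)
  fix U a b c d assume U: "unitary_F realF m U" and abcd: "a < m" "b < m" "c < m" "d < m"
  have "(\<Sum>i\<in>I. tensor (conj_by m U (P i)) (conj_by m U (P i)) (a, b) (c, d))
      = (\<Sum>a'<m. \<Sum>b'<m. \<Sum>c'<m. \<Sum>d'<m.
          (U a a' * cnj (U c c') * U b b' * cnj (U d d')) * iso_tensor \<alpha> \<beta> \<gamma> a' b' c' d')"
    unfolding sum_tensor_conj_by using moment by (intro sum.cong refl) (simp add: tensor_def)
  also have "\<dots> = (\<Sum>i\<in>I. tensor (P i) (P i) (a, b) (c, d))"
    using iso_tensor_conj_unitary[OF U real abcd] moment[OF abcd] by simp
  finally show "(\<Sum>i\<in>I. tensor (P i) (P i) (a, b) (c, d))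
      = (\<Sum>i\<in>I. tensor (conj_by m U (P i)) (conj_by m U (P i)) (a, b) (c, d))" by simp
qed

section \<open>Permuting a basis\<close>

definition basis_perm :: "nat \<Rightarrow> (nat \<Rightarrow> cvec) \<Rightarrow> (nat \<Rightarrow> nat) \<Rightarrow> cmat" where
  "basis_perm m b p = (\<lambda>a c. \<Sum>i<m. b i a * cnj (b (p i) c))"

lemma basis_perm_unitary:
  assumes onb: "orthonormal_basis realF m b" and p: "inj_on p {..<m}" "p ` {..<m} \<subseteq> {..<m}"
  shows "unitary_F realF m (basis_perm m b p)"
proof -
  let ?U = "basis_perm m b p"
  have "mat_in_F realF m ?U"
  proof (unfold mat_in_F_def, intro impI allI)
    fix a c assume "realF" "a < m" "c < m"
    then have "\<forall>i<m. \<forall>x<m. b i x \<in> \<real>"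
      using onb unfolding orthonormal_basis_def in_F_def by blast
    then show "?U a c \<in> \<real>"
      using p(2) \<open>a < m\<close> \<open>c < m\<close> unfolding basis_perm_def
      by (intro sum_in_Reals) (auto simp: Reals_cnj_iff)
  qed
  moreover have "(\<Sum>k<m. ?U a k * cnj (?U c k)) = (if a = c then 1 else 0)"
    if ac: "a < m" "c < m" for a c
  proof -
    have "(\<Sum>k<m. ?U a k * cnj (?U c k))
       = (\<Sum>k<m. \<Sum>i<m. \<Sum>i'<m. b i a * cnj (b i' c) * (b (p i') k * cnj (b (p i) k)))"
      unfolding basis_perm_def by (simp add: sum_product mult_ac)
    also have "\<dots> = (\<Sum>i<m. \<Sum>i'<m. \<Sum>k<m. b i a * cnj (b i' c) * (b (p i') k * cnj (b (p i) k)))"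
      by (rule sum_swap_2_1[symmetric])
    also have "\<dots> = (\<Sum>i<m. \<Sum>i'<m. b i a * cnj (b i' c) * (if i = i' then 1 else 0))"
    proof (intro sum.cong refl)
      fix i i' assume "i \<in> {..<m}" "i' \<in> {..<m}"
      with p have "p i < m" "p i' < m" "p i' = p i \<longleftrightarrow> i' = i"
        by (auto simp: inj_on_eq_iff)
      then have "(\<Sum>k<m. b (p i') k * cnj (b (p i) k)) = (if i = i' then 1 else 0)"
        by (auto simp: orthonormal_basis_inner[OF onb])
      then show "(\<Sum>k<m. b i a * cnj (b i' c) * (b (p i') k * cnj (b (p i) k)))
          = b i a * cnj (b i' c) * (if i = i' then 1 else 0)"
        by (simp only: sum_distrib_left[symmetric])
    qed
    also have "\<dots> = (\<Sum>i<m. b i a * cnj (b i c))"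
      by (simp add: delta_simps)
    finally show ?thesis
      using orthonormal_basis_complete[OF onb ac] by simp
  qed
  ultimately show ?thesis
    unfolding unitary_F_def by blast
qed

lemma basis_perm_adjoint_apply:
  assumes onb: "orthonormal_basis realF m b" and "x < m"
  shows "(\<Sum>c<m. cnj (basis_perm m b p c a) * b x c) = b (p x) a"
proof -
  have "(\<Sum>c<m. cnj (basis_perm m b p c a) * b x c) = (\<Sum>c<m. \<Sum>i<m. b (p i) a * (b x c * cnj (b i c)))"
    unfolding basis_perm_def by (simp add: sum_distrib_left sum_distrib_right mult_ac)
  also have "\<dots> = (\<Sum>i<m. b (p i) a * (\<Sum>c<m. b x c * cnj (b i c)))"
    by (subst sum.swap) (simp only: sum_distrib_left)
  also have "\<dots> = (\<Sum>i<m. if i = x then b (p i) a else 0)"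
    using \<open>x < m\<close> by (intro sum.cong refl) (auto simp: orthonormal_basis_inner[OF onb])
  finally show ?thesis
    using \<open>x < m\<close> by simp
qed

definition quad_form :: "nat \<Rightarrow> cmat \<Rightarrow> cvec \<Rightarrow> complex" where
  "quad_form m A x = (\<Sum>a<m. \<Sum>c<m. cnj (x a) * A a c * x c)"

lemma sum_tensor_quad_form:
  "(\<Sum>a<m. \<Sum>b<m. \<Sum>c<m. \<Sum>d<m. (cnj (x a) * cnj (y b) * x c * y d) * (\<Sum>i\<in>I. tensor (A i) (A i) (a, b) (c, d)))
   = (\<Sum>i\<in>I. quad_form m (A i) x * quad_form m (A i) y)"
proof -
  have "(\<Sum>a<m. \<Sum>b<m. \<Sum>c<m. \<Sum>d<m. (cnj (x a) * cnj (y b) * x c * y d) * (\<Sum>i\<in>I. tensor (A i) (A i) (a, b) (c, d)))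
     = (\<Sum>a<m. \<Sum>b<m. \<Sum>c<m. \<Sum>d<m. \<Sum>i\<in>I. (cnj (x a) * cnj (y b) * x c * y d) * tensor (A i) (A i) (a, b) (c, d))"
    by (simp only: sum_distrib_left)
  also have "\<dots> = (\<Sum>i\<in>I. \<Sum>a<m. \<Sum>b<m. \<Sum>c<m. \<Sum>d<m. (cnj (x a) * cnj (y b) * x c * y d) * tensor (A i) (A i) (a, b) (c, d))"
    by (rule sum_swap_1_4[symmetric])
  also have "\<dots> = (\<Sum>i\<in>I. quad_form m (A i) x * quad_form m (A i) y)"
    unfolding quad_form_def tensor_def
    by (simp only: split sum_product) (intro sum.cong refl, simp add: mult_ac)
  finally show ?thesis .
qed

lemma quad_form_conj_by:
  "quad_form m (conj_by m U P) x = quad_form m P (\<lambda>a. \<Sum>c<m. cnj (U c a) * x c)"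
proof -
  have "quad_form m (conj_by m U P) x
      = (\<Sum>a<m. \<Sum>c<m. \<Sum>a'<m. \<Sum>c'<m. cnj (x a) * U a a' * P a' c' * cnj (U c c') * x c)"
    unfolding quad_form_def conj_by_def by (simp add: sum_distrib_left sum_distrib_right mult_ac)
  also have "\<dots> = (\<Sum>a'<m. \<Sum>c'<m. \<Sum>a<m. \<Sum>c<m. cnj (x a) * U a a' * P a' c' * cnj (U c c') * x c)"
    by (rule sum_swap_2_2)
  also have "\<dots> = quad_form m P (\<lambda>a. \<Sum>c<m. cnj (U c a) * x c)"
    unfolding quad_form_def by (simp add: sum_distrib_left sum_distrib_right mult_ac)
  finally show ?thesis .
qed

lemma quad_form_coord_proj:
  "quad_form m (coord_proj b J) v = (\<Sum>j\<in>J. complex_of_real ((cmod (inner_F m (b j) v))\<^sup>2))"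
proof -
  have "quad_form m (coord_proj b J) v = (\<Sum>j\<in>J. (\<Sum>c<m. v c * cnj (b j c)) * cnj (\<Sum>c<m. v c * cnj (b j c)))"
    unfolding quad_form_def coord_proj_def
    by (simp add: sum_distrib_left sum_distrib_right sum_product mult_ac sum.swap[of _ J])
  also have "\<dots> = (\<Sum>j\<in>J. complex_of_real ((cmod (inner_F m (b j) v))\<^sup>2))"
  proof (rule sum.cong[OF refl])
    fix j
    have "inner_F m (b j) v = cnj (\<Sum>c<m. v c * cnj (b j c))"
      unfolding inner_F_def by (simp add: mult.commute)
    then show "(\<Sum>c<m. v c * cnj (b j c)) * cnj (\<Sum>c<m. v c * cnj (b j c))
        = complex_of_real ((cmod (inner_F m (b j) v))\<^sup>2)"
      by (simp only: complex_norm_square complex_mod_cnj)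
  qed
  finally show ?thesis .
qed

lemma quad_form_coord_proj_basis_vector:
  fixes B :: "'k \<Rightarrow> nat \<Rightarrow> cvec"
  assumes MUB: "MUB_set realF m K B" and k0: "k0 \<in> K" and k: "k \<in> K"
    and J: "J \<subseteq> {..<m}" and x: "x < m"
  shows "quad_form m (coord_proj (B k) J) (B k0 x)
    = (if k = k0 then (if x \<in> J then 1 else 0) else of_nat (card J) / of_nat m)"
proof (cases "k = k0")
  case True
  have onb: "orthonormal_basis realF m (B k0)"
    using MUB k0 unfolding MUB_set_def by blast
  have "quad_form m (coord_proj (B k) J) (B k0 x) = (\<Sum>j\<in>J. if j = x then 1 else 0)"
    unfolding quad_form_coord_proj True
  proof (rule sum.cong[OF refl])
    fix j assume "j \<in> J"
    then have "inner_F m (B k0 j) (B k0 x) = (if j = x then 1 else 0)"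
      using J x orthonormal_basis_inner[OF onb] unfolding inner_F_def by auto
    then show "complex_of_real ((cmod (inner_F m (B k0 j) (B k0 x)))\<^sup>2) = (if j = x then 1 else 0)"
      by simp
  qed
  then show ?thesis
    using True J by (simp add: finite_subset)
next
  case False
  have "quad_form m (coord_proj (B k) J) (B k0 x) = (\<Sum>j\<in>J. 1 / of_nat m)"
    unfolding quad_form_coord_proj
  proof (rule sum.cong[OF refl])
    fix j assume "j \<in> J"
    then have "(cmod (inner_F m (B k j) (B k0 x)))\<^sup>2 = 1 / real m"
      using MUB k k0 False J x unfolding MUB_set_def mutually_unbiased_def by blast
    then show "complex_of_real ((cmod (inner_F m (B k j) (B k0 x)))\<^sup>2) = 1 / of_nat m"
      by simp
  qed
  then show ?thesis
    using False by simp
qed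

lemma coord_frame_quad_form_moment:
  fixes B :: "'k \<Rightarrow> nat \<Rightarrow> cvec"
  assumes MUB: "MUB_set realF m K B" and finK: "finite K" and k0: "k0 \<in> K"
    and finS: "finite S" and S: "\<forall>J\<in>S. J \<subseteq> {..<m}" and x: "x < m" and y: "y < m"
  shows "(\<Sum>i\<in>K \<times> S. quad_form m ((\<lambda>(k, J). coord_proj (B k) J) i) (B k0 x)
                      * quad_form m ((\<lambda>(k, J). coord_proj (B k) J) i) (B k0 y))
    = of_nat (pair_count S x y) + (\<Sum>k\<in>K - {k0}. \<Sum>J\<in>S. (of_nat (card J) / of_nat m)\<^sup>2)"
proof -
  have "(\<Sum>i\<in>K \<times> S. quad_form m ((\<lambda>(k, J). coord_proj (B k) J) i) (B k0 x)
                    * quad_form m ((\<lambda>(k, J). coord_proj (B k) J) i) (B k0 y))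
     = (\<Sum>k\<in>K. \<Sum>J\<in>S. (if k = k0 then (if x \<in> J \<and> y \<in> J then 1 else 0)
                          else (of_nat (card J) / of_nat m)\<^sup>2))"
    unfolding sum.cartesian_product' using S
    by (intro sum.cong refl)
      (simp add: quad_form_coord_proj_basis_vector[OF MUB k0 _ _ x]
        quad_form_coord_proj_basis_vector[OF MUB k0 _ _ y] power2_eq_square)
  also have "\<dots> = (\<Sum>J\<in>S. (if x \<in> J \<and> y \<in> J then 1 else 0))
      + (\<Sum>k\<in>K - {k0}. \<Sum>J\<in>S. (of_nat (card J) / of_nat m)\<^sup>2)"
    using finK k0 by (simp add: sum.remove)
  also have "(\<Sum>J\<in>S. (if x \<in> J \<and> y \<in> J then 1 else 0)) = (of_nat (pair_count S x y) :: complex)"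
    unfolding pair_count_def using sum_if_card_filter[OF finS, of "\<lambda>J. x \<in> J \<and> y \<in> J" 1] by simp
  finally show ?thesis .
qed

lemma grassmannian_pair_count_invariant:
  fixes B :: "'k \<Rightarrow> nat \<Rightarrow> cvec"
  assumes MUB: "MUB_set realF m K B" and finK: "finite K" and k0: "k0 \<in> K"
    and finS: "finite S" and S: "\<forall>J\<in>S. J \<subseteq> {..<m}"
    and G: "grassmannian_2_design realF m (K \<times> S) (\<lambda>(k, J). coord_proj (B k) J)"
    and p: "inj_on p {..<m}" "p ` {..<m} \<subseteq> {..<m}" and x: "x < m" and y: "y < m"
  shows "pair_count S (p x) (p y) = pair_count S x y"
proof -
  let ?P = "\<lambda>i. (\<lambda>(k, J). coord_proj (B k) J) i"
  let ?U = "basis_perm m (B k0) p"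
  let ?w = "\<lambda>a b c d. cnj (B k0 x a) * cnj (B k0 y b) * B k0 x c * B k0 y d"
  have onb: "orthonormal_basis realF m (B k0)"
    using MUB k0 unfolding MUB_set_def by blast
  have invariant: "(\<Sum>i\<in>K \<times> S. tensor (?P i) (?P i) (a, b) (c, d))
      = (\<Sum>i\<in>K \<times> S. tensor (conj_by m ?U (?P i)) (conj_by m ?U (?P i)) (a, b) (c, d))"
    if "a < m" "b < m" "c < m" "d < m" for a b c d
    using G basis_perm_unitary[OF onb p] that unfolding grassmannian_2_design_def by blast
  have conj_basis: "quad_form m (conj_by m ?U P) (B k0 z) = quad_form m P (B k0 (p z))"
    if "z < m" for P z
  proof -
    have "(\<lambda>a. \<Sum>c<m. cnj (?U c a) * B k0 z c) = B k0 (p z)"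
      using basis_perm_adjoint_apply[OF onb that] by (intro ext) simp
    then show ?thesis
      by (simp only: quad_form_conj_by)
  qed
  have "(\<Sum>i\<in>K \<times> S. quad_form m (?P i) (B k0 x) * quad_form m (?P i) (B k0 y))
     = (\<Sum>a<m. \<Sum>b<m. \<Sum>c<m. \<Sum>d<m. ?w a b c d * (\<Sum>i\<in>K \<times> S. tensor (?P i) (?P i) (a, b) (c, d)))"
    by (rule sum_tensor_quad_form[symmetric])
  also have "\<dots> = (\<Sum>a<m. \<Sum>b<m. \<Sum>c<m. \<Sum>d<m.
      ?w a b c d * (\<Sum>i\<in>K \<times> S. tensor (conj_by m ?U (?P i)) (conj_by m ?U (?P i)) (a, b) (c, d)))"
    by (intro sum.cong refl) (simp add: invariant)
  also have "\<dots> = (\<Sum>i\<in>K \<times> S. quad_form m (conj_by m ?U (?P i)) (B k0 x) * quad_form m (conj_by m ?U (?P i)) (B k0 y))"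
    by (rule sum_tensor_quad_form)
  also have "\<dots> = (\<Sum>i\<in>K \<times> S. quad_form m (?P i) (B k0 (p x)) * quad_form m (?P i) (B k0 (p y)))"
    by (simp only: conj_basis[OF x] conj_basis[OF y])
  finally have "(of_nat (pair_count S x y) :: complex) = of_nat (pair_count S (p x) (p y))"
    using p(2) x y
    by (simp add: coord_frame_quad_form_moment[OF MUB finK k0 finS S] image_subset_iff)
  then show ?thesis
    by simp
qed

section \<open>Counting blocks\<close>

lemma transpose_invariant_eq_off_diagonal:
  fixes n :: "nat \<Rightarrow> nat \<Rightarrow> 'a"
  assumes inv: "\<And>a b x y. a < m \<Longrightarrow> b < m \<Longrightarrow> x < m \<Longrightarrow> y < m \<Longrightarrow>
      n (transpose a b x) (transpose a b y) = n x y"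
    and uv: "u < m" "v < m" "u \<noteq> v" and xy: "x < m" "y < m" "x \<noteq> y"
  shows "n u v = n x y"
proof (cases "x = v")
  case True
  have "n u v = n v u"
    using inv[OF uv(1,2) uv(1,2)] by simp
  also have "\<dots> = n v y"
    using inv[OF uv(1) xy(2) uv(2,1)] uv(3) xy(3) True by simp
  finally show ?thesis
    using True by simp
next
  case False
  have "n u v = n x v"
    using inv[OF uv(1) xy(1) uv(1,2)] uv(3) False by simp
  also have "\<dots> = n x y"
    using inv[OF uv(2) xy(2) xy(1) uv(2)] False xy(3) by simp
  finally show ?thesis .
qed

lemma sum_card_blocks_containing_pair:
  fixes m t :: nat
  assumes finS: "finite S" and S: "\<forall>J\<in>S. J \<subseteq> {..<m} \<and> card J = t"
  shows "(\<Sum>p\<in>{p. p \<subseteq> {..<m} \<and> card p = 2}. card {J\<in>S. p \<subseteq> J}) = card S * (t choose 2)"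
proof -
  let ?P2 = "{p. p \<subseteq> {..<m} \<and> card p = 2}"
  have finP: "finite ?P2"
    by (rule finite_subset[of _ "Pow {..<m}"]) auto
  have "(\<Sum>p\<in>?P2. card {J\<in>S. p \<subseteq> J}) = (\<Sum>p\<in>?P2. \<Sum>J\<in>S. if p \<subseteq> J then 1 else 0)"
    using finS by (simp add: sum_if_card_filter)
  also have "\<dots> = (\<Sum>J\<in>S. \<Sum>p\<in>?P2. if p \<subseteq> J then 1 else 0)"
    by (rule sum.swap)
  also have "\<dots> = (\<Sum>J\<in>S. t choose 2)"
  proof (rule sum.cong[OF refl])
    fix J assume "J \<in> S"
    then have J: "J \<subseteq> {..<m}" "card J = t" using S by auto
    have "(\<Sum>p\<in>?P2. if p \<subseteq> J then 1 else 0) = card {p\<in>?P2. p \<subseteq> J}"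
      using finP by (simp add: sum_if_card_filter)
    also have "{p\<in>?P2. p \<subseteq> J} = {p. p \<subseteq> J \<and> card p = 2}"
      using J by auto
    also have "card \<dots> = t choose 2"
      using n_subsets[of J 2] J finite_subset[OF J(1)] by simp
    finally show "(\<Sum>p\<in>?P2. if p \<subseteq> J then 1 else 0) = t choose 2" .
  qed
  finally show ?thesis by simp
qed

lemma replication_mult_eq:
  assumes finS: "finite S" and S: "\<forall>J\<in>S. J \<subseteq> {..<m} \<and> card J = t"
    and lam: "\<forall>j<m. \<forall>j'<m. j \<noteq> j' \<longrightarrow> pair_count S j j' = lam"
    and j: "j < m"
  shows "(m - 1) * lam = pair_count S j j * (t - 1)"
proof -
  let ?A = "{..<m} - {j}"
  have "(m - 1) * lam = (\<Sum>j'\<in>?A. pair_count S j j')"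
    using lam j by (simp add: card_Diff_singleton)
  also have "\<dots> = (\<Sum>j'\<in>?A. \<Sum>J\<in>S. if j \<in> J \<and> j' \<in> J then 1 else 0)"
    unfolding pair_count_def using finS by (simp add: sum_if_card_filter)
  also have "\<dots> = (\<Sum>J\<in>S. \<Sum>j'\<in>?A. if j \<in> J \<and> j' \<in> J then 1 else 0)"
    by (rule sum.swap)
  also have "\<dots> = (\<Sum>J\<in>S. if j \<in> J then t - 1 else 0)"
  proof (rule sum.cong[OF refl])
    fix J assume "J \<in> S"
    then have J: "J \<subseteq> {..<m}" "card J = t" using S by auto
    show "(\<Sum>j'\<in>?A. if j \<in> J \<and> j' \<in> J then 1 else 0) = (if j \<in> J then t - 1 else 0)"
    proof (cases "j \<in> J")
      case True
      then have "(\<Sum>j'\<in>?A. if j \<in> J \<and> j' \<in> J then 1 else 0) = card {j'\<in>?A. j' \<in> J}"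
        by (simp add: sum_if_card_filter)
      also have "{j'\<in>?A. j' \<in> J} = J - {j}"
        using J by auto
      finally show ?thesis
        using J True finite_subset[OF J(1)] by simp
    qed simp
  qed
  also have "\<dots> = pair_count S j j * (t - 1)"
    unfolding pair_count_def using finS by (simp add: sum_if_card_filter flip: sum_distrib_right)
  finally show ?thesis .
qed

lemma card_blocks_eq:
  assumes "t \<ge> 1" "kF realF (2 * t) * s = 2 * dF realF (2 * t)"
  shows "s = 2 * (2 * t - 1)"
proof -
  have "kF realF (2 * t) * s = kF realF (2 * t) * (2 * (2 * t - 1))"
  proof (cases realF)
    case True
    have "(2 * t + 2) * (2 * t - 1) = 2 * ((t + 1) * (2 * t - 1))"
      by simp
    then show ?thesis
      using True assms(2) unfolding dF_def kF_def by simp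
  next
    case False
    have "(2 * t)\<^sup>2 - 1 = (2 * t + 1) * (2 * t - 1)"
      using assms(1) by (simp add: power2_eq_square algebra_simps diff_mult_distrib2)
    then show ?thesis
      using False assms(2) unfolding dF_def kF_def by (simp add: algebra_simps)
  qed
  moreover have "kF realF (2 * t) > 0"
    unfolding kF_def by simp
  ultimately show ?thesis
    by simp
qed

lemma block_count_arith:
  assumes "t \<ge> 1" "((2 * t) choose 2) * c = (2 * (2 * t - 1)) * (t choose 2)"
  shows "c = t - 1"
proof -
  have "even (t * (t - 1))"
    by (cases "even t") auto
  then have "2 * (t choose 2) = t * (t - 1)"
    by (simp add: choose_two even_two_times_div_two)
  moreover have "(2 * t) choose 2 = t * (2 * t - 1)"
    by (simp add: choose_two)
  ultimately have "t * (2 * t - 1) * c = t * (2 * t - 1) * (t - 1)"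
    using assms(2) by (metis mult.assoc mult.commute mult.left_commute)
  moreover have "t * (2 * t - 1) > 0"
    using assms(1) by simp
  ultimately show ?thesis
    by simp
qed

lemma coord_fusion_frame_blocks:
  fixes B :: "'k \<Rightarrow> nat \<Rightarrow> cvec"
  assumes MUB: "maximal_MUB_set realF m K B" and m: "m = 2 * t" "t \<ge> 1"
    and S: "\<forall>J\<in>S. J \<subseteq> {..<m}"
    and frame: "fusion_frame realF (2 * dF realF m) t m (K \<times> S) (\<lambda>(k, J). coord_proj (B k) J)"
  shows "finite S" and "card S = 2 * (2 * t - 1)" and "\<forall>J\<in>S. card J = t"
proof -
  have onb: "\<And>k. k \<in> K \<Longrightarrow> orthonormal_basis realF m (B k)"
    and finK: "finite K" and cK: "card K = kF realF m"
    using MUB unfolding maximal_MUB_set_def MUB_set_def by blast+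
  obtain k0 where k0: "k0 \<in> K"
    using cK finK unfolding kF_def by (cases "K = {}") (auto split: if_splits)
  have fin: "finite (K \<times> S)" and card: "card (K \<times> S) = 2 * dF realF m"
    and rank: "\<forall>i\<in>K \<times> S. orth_proj_rank realF m t ((\<lambda>(k, J). coord_proj (B k) J) i)"
    using frame unfolding fusion_frame_def by blast+
  show finS: "finite S"
    using finite_cartesian_productD2[OF fin] k0 by blast
  show "card S = 2 * (2 * t - 1)"
    using card cK finK finS m by (intro card_blocks_eq) (simp_all add: card_cartesian_product)
  show "\<forall>J\<in>S. card J = t"
  proof
    fix J assume J: "J \<in> S"
    have "(of_nat (card J) :: complex) = of_nat t"
      using orth_proj_rank_trace[of realF m t "coord_proj (B k0) J"] rank k0 J
        coord_proj_trace[OF onb[OF k0]] S by simp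
    then show "card J = t"
      by (simp only: of_nat_eq_iff)
  qed
qed

lemma grassmannian_imp_block_design:
  fixes B :: "'k \<Rightarrow> nat \<Rightarrow> cvec"
  assumes MUB: "MUB_set realF m K B" and finK: "finite K" and k0: "k0 \<in> K"
    and m: "m = 2 * t" "t \<ge> 1"
    and finS: "finite S" and S: "\<forall>J\<in>S. J \<subseteq> {..<m} \<and> card J = t" and cS: "card S = 2 * (2 * t - 1)"
    and G: "grassmannian_2_design realF m (K \<times> S) (\<lambda>(k, J). coord_proj (B k) J)"
  shows "block_design_2 m t (t - 1) S"
proof -
  have pair_count_eq: "pair_count S u v = pair_count S 0 1" if "u < m" "v < m" "u \<noteq> v" for u v
  proof (rule transpose_invariant_eq_off_diagonal[where n = "pair_count S" and m = m])
    fix a b x y assume "a < m" "b < m" "x < m" "y < m"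
    moreover from \<open>a < m\<close> \<open>b < m\<close>
    have "inj_on (transpose a b) {..<m}" "transpose a b ` {..<m} \<subseteq> {..<m}"
      by (auto simp: inj_on_def transpose_def)
    ultimately show "pair_count S (transpose a b x) (transpose a b y) = pair_count S x y"
      using S by (intro grassmannian_pair_count_invariant[OF MUB finK k0 finS _ G]) auto
  qed (use that m in auto)
  have block_pair: "card {J\<in>S. p \<subseteq> J} = pair_count S 0 1" if "p \<subseteq> {..<m}" "card p = 2" for p
  proof -
    obtain u v where "p = {u, v}" "u \<noteq> v"
      using \<open>card p = 2\<close> by (auto simp: card_2_iff)
    with that show ?thesis
      using pair_count_eq[of u v] unfolding pair_count_def by simp
  qed
  let ?P2 = "{p. p \<subseteq> {..<m} \<and> card p = 2}"
  have "(\<Sum>p\<in>?P2. card {J\<in>S. p \<subseteq> J}) = (m choose 2) * pair_count S 0 1"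
    using block_pair n_subsets[of "{..<m}" 2] by simp
  then have "pair_count S 0 1 = t - 1"
    using sum_card_blocks_containing_pair[OF finS S] block_count_arith[OF m(2)] cS m by simp
  then show ?thesis
    unfolding block_design_2_def atLeast0LessThan using S block_pair by auto
qed

lemma block_design_imp_grassmannian:
  fixes B :: "'k \<Rightarrow> nat \<Rightarrow> cvec"
  assumes MUB: "maximal_MUB_set realF m K B" and m: "m = 2 * t" "t \<ge> 1"
    and finS: "finite S" and cS: "card S = 2 * (2 * t - 1)"
    and D: "block_design_2 m t (t - 1) S"
  shows "grassmannian_2_design realF m (K \<times> S) (\<lambda>(k, J). coord_proj (B k) J)"
proof -
  have S: "\<forall>J\<in>S. J \<subseteq> {..<m} \<and> card J = t"
    using D unfolding block_design_2_def atLeast0LessThan by blast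
  have lam: "\<forall>j<m. \<forall>j'<m. j \<noteq> j' \<longrightarrow> pair_count S j j' = t - 1"
  proof (intro allI impI)
    fix j j' assume "j < m" "j' < m" "j \<noteq> j'"
    then have "{j, j'} \<subseteq> {0..<m} \<and> card {j, j'} = 2"
      by auto
    then have "card {J\<in>S. {j, j'} \<subseteq> J} = t - 1"
      using D unfolding block_design_2_def by blast
    then show "pair_count S j j' = t - 1"
      unfolding pair_count_def by simp
  qed
  have rep: "pair_count S j j = m - 1" if j: "j < m" for j
  proof (cases "t = 1")
    case True
    \<comment> \<open>For \<open>m = 2\<close> the pair condition is void; the two blocks must be \<open>{0}\<close> and \<open>{1}\<close>.\<close>
    have "S \<subseteq> {{0}, {1}}"
    proof
      fix J assume "J \<in> S"
      then have "J \<subseteq> {..<2}" "card J = 1"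
        using S True m by auto
      then obtain x where "J = {x}" "x < 2"
        by (auto simp: card_1_singleton_iff)
      then show "J \<in> {{0}, {1}}"
        by (cases x) auto
    qed
    moreover have "card S = card {{0::nat}, {1}}"
      using cS True by simp
    ultimately have "S = {{0}, {1}}"
      using card_subset_eq[of "{{0}, {1}}" S] by simp
    moreover have "j = 0 \<or> j = 1"
      using j True m by auto
    ultimately have "{J\<in>S. j \<in> J \<and> j \<in> J} = {{j}}"
      by auto
    then show ?thesis
      using True m unfolding pair_count_def by simp
  next
    case False
    then show ?thesis
      using replication_mult_eq[OF finS S lam j] m by simp
  qed
  have counts: "\<forall>j<m. \<forall>j'<m. pair_count S j j' = (if j = j' then m - 1 else t - 1)"
    using lam rep by auto
  have "realF \<Longrightarrow> even m" "0 < m" "\<forall>J\<in>S. J \<subseteq> {..<m}"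
    using m S by auto
  note moment = coord_frame_fourth_moment[OF MUB this(2,1) finS this(3) counts]
  show ?thesis
    by (rule grassmannian_2_design_if_iso_tensor[OF moment]) (simp_all add: mub_\<gamma>_def split: if_splits)
qed

theorem theorem3p17:
  fixes realF :: bool and m l :: nat and K :: "'k set"
    and B :: "'k \<Rightarrow> nat \<Rightarrow> cvec" and S :: "nat set set"
  assumes "0 < m" and "even m"
    and "maximal_MUB_set realF m K B"
    and "\<forall>J\<in>S. J \<subseteq> {0..<m} \<and> card J = l"
    and "fusion_frame realF (2 * dF realF m) (m div 2) m (K \<times> S)
           (\<lambda>(k, J). coord_proj (B k) J)"
  shows "grassmannian_2_design realF m (K \<times> S) (\<lambda>(k, J). coord_proj (B k) J)
         \<longleftrightarrow> block_design_2 m (m div 2) (m div 2 - 1) S"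
proof -
  obtain t where "m = 2 * t"
    using assms(2) by blast
  with assms(1) have m: "m = 2 * t" "t \<ge> 1"
    by auto
  have MUB: "MUB_set realF m K B" "finite K"
    using assms(3) unfolding maximal_MUB_set_def by auto
  obtain k0 where k0: "k0 \<in> K"
    using assms(3) unfolding maximal_MUB_set_def kF_def by (cases "K = {}") (auto split: if_splits)
  have S: "\<forall>J\<in>S. J \<subseteq> {..<m}"
    using assms(4) by (auto simp: atLeast0LessThan)
  have frame: "fusion_frame realF (2 * dF realF m) t m (K \<times> S) (\<lambda>(k, J). coord_proj (B k) J)"
    using assms(5) m by simp
  note blocks = coord_fusion_frame_blocks[OF assms(3) m S frame]
  have "m div 2 = t" "\<forall>J\<in>S. J \<subseteq> {..<m} \<and> card J = t"
    using m S blocks(3) by auto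
  then show ?thesis
    using grassmannian_imp_block_design[OF MUB k0 m blocks(1) _ blocks(2)]
      block_design_imp_grassmannian[OF assms(3) m blocks(1,2)]
    by auto
qed

end
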